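(* Let $p\ge1$ and let $\mathbf X$ be a random variable with values in $\mathcal G^w_p(V)$ such that $\mathbb E|\langle\mathbf X_{0,T},e_\sigma\rangle|<\infty$ for all $\sigma\in[d]^*$. Then for every $k\ge1$ and nonempty words $\tau_1,\dots,\tau_k\in[d]^*$, with $\boldsymbol\tau=(\tau_1,\dots,\tau_k)$, $$\langle\kappa_{\mathbf X},e_{\tau_1}\sqcup\cdots\sqcup e_{\tau_k}\rangle=\sum_{\mathbf a\in\mathrm{Orp}(\boldsymbol\tau)}(-1)^{|\mathbf a|-1}\frac{\mathbf a!}{|\mathbf a|}\,\mu_{\mathbf X}(\mathbf a).$$
   Context: Let $V=\mathbb R^d$ with basis $e_1,\dots,e_d$; $[n]=\{1,\dots,n\}$; $[d]^*=\bigcup_{m\ge0}[d]^m$ is the set of words, $|\tau|$ the length, $e_\tau=e_{i_1}\otimes\cdots\otimes e_{i_m}$ for $\tau=(i_1,\dots,i_m)$, $e_{()}=1$. $T(V)=\bigoplus_{m\ge0}V^{\otimes m}$, $T((V))=\prod_{m\ge0}V^{\otimes m}$ (an algebra under $\otimes$), pairing $\langle s,t\rangle=\sum_\tau s_\tau t_\tau$. For $y\in T((V))$ with $\langle y,1\rangle=1$, $\log y=\sum_{n\ge1}\frac{(-1)^{n-1}}{n}(y-1)^{\otimes n}$. The shuffle product $\sqcup$ on $T(V)$ is the bilinear extension of $e_{\tau_1}\sqcup e_{\tau_2}=\sum_\sigma e_\sigma$ over all interleavings $\sigma$ of $\tau_1,\tau_2$ counted with multiplicity; it is associative and commutative. Weakly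 geometric $p$-rough paths ($p\ge1$, $T>0$): maps $\mathbf x:\{(s,t):0\le s\le t\le T\}\to T((V))$ with, for $0\le s\le t\le u\le T$, (i) $\langle\mathbf x_{s,t},1\rangle=1$, $\langle\mathbf x_{s,t},f\sqcup g\rangle=\langle\mathbf x_{s,t},f\rangle\langle\mathbf x_{s,t},g\rangle$ for $f,g\in T(V)$; (ii) $\mathbf x_{s,t}\otimes\mathbf x_{t,u}=\mathbf x_{s,u}$; (iii) finite $p$-variation $\max_{1\le m\le p}\sup_D(\sum_i|\pi_m\mathbf x_{t_i,t_{i+1}}|^{p/m})^{1/p}<\infty$. $\mathcal G^w_p(V)$ is the set of these. For a random $\mathbf X$ with integrable signature coordinates: $\mu_{\mathbf X}=\mathbb E[\mathbf X_{0,T}]$, $\kappa_{\mathbf X}=\log\mu_{\mathbf X}$. Partitions and ordered partitions: for a finite poset $P$, $\mathcal P(P)$ is the set of partitions into nonempty blocks, ordered by refinement; $|\mathbf a|$ is the number of blocks. $f:P\to\mathbb N$ is order-preserving if $x\le y\Rightarrow f(x)\le f(y)$; $\ker f$ is the set of nonempty fibres; $\mathrm{Orp}(P)=\{\ker f: f \text{ order-preserving}\}$; for $\mathbf a\in\mathrm{Orp}(P)$, $\mathbf a!=\#\{f:P\to[|\mathbf a|]\text{ order-preserving}:\ker f=\mathbf a\}$. Word poset: $P_{\boldsymbol\tau}=\{(j,p):j\in[k],p\in[|\tau_j|]\}$ (positions treated as distinct even if letters repeat), with $(j,p)\le(j',p')$ iff $j=j'$ and $p\le p'$; $\mathcal P(\boldsymbol\tau)=\mathcal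 P(P_{\boldsymbol\tau})$, $\mathrm{Orp}(\boldsymbol\tau)=\mathrm{Orp}(P_{\boldsymbol\tau})$. For a block $B$ and $j$, $B^j=B\cap(\{j\}\times[|\tau_j|])$; if nonempty with positions $p_1<\dots<p_r$, $e_{B^j}=e_{\tau_j(p_1)}\otimes\cdots\otimes e_{\tau_j(p_r)}$ ($\tau_j(p)$ the $p$-th letter). Generalised moment: $\mu_{\mathbf X}(\mathbf a)=\prod_{B\in\mathbf a}\mathbb E\big[\prod_{j:B^j\ne\emptyset}\langle\mathbf X_{0,T},e_{B^j}\rangle\big]$. *)

theory Defs
  imports "HOL-Probability.Probability"
begin

text \<open>Words over the alphabet [d] = {1..d} are lists of naturals with letters in {1..d}.
  Elements of T((V)) are represented by their coordinate functions (word to real).\<close>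

definition is_word :: "nat \<Rightarrow> nat list \<Rightarrow> bool" where
  "is_word d w \<longleftrightarrow> set w \<subseteq> {1..d}"

text \<open>Shuffle of two words, as a list of words counted with multiplicity.\<close>
fun shuffle :: "'a list \<Rightarrow> 'a list \<Rightarrow> 'a list list" where
  "shuffle [] ys = [ys]"
| "shuffle xs [] = [xs]"
| "shuffle (x # xs) (y # ys) =
     map ((#) x) (shuffle xs (y # ys)) @ map ((#) y) (shuffle (x # xs) ys)"

text \<open>e_{t1} shuffle ... shuffle e_{tk}, as a list of words with multiplicity.\<close>
fun shuffle_many :: "'a list list \<Rightarrow> 'a list list" where
  "shuffle_many [] = [[]]"
| "shuffle_many (t # ts) = concat (map (shuffle t) (shuffle_many ts))"

text \<open>Pairing of a tensor series with a tensor given as a list of basis words (with multiplicity).\<close>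
definition pair_words :: "(nat list \<Rightarrow> real) \<Rightarrow> nat list list \<Rightarrow> real" where
  "pair_words s ws = sum_list (map s ws)"

definition tprod :: "(nat list \<Rightarrow> real) \<Rightarrow> (nat list \<Rightarrow> real) \<Rightarrow> nat list \<Rightarrow> real" where
  "tprod s t w = (\<Sum>i\<le>length w. s (take i w) * t (drop i w))"

definition tunit :: "nat list \<Rightarrow> real" where
  "tunit w = (if w = [] then 1 else 0)"

fun tpow :: "(nat list \<Rightarrow> real) \<Rightarrow> nat \<Rightarrow> nat list \<Rightarrow> real" where
  "tpow y 0 = tunit"
| "tpow y (Suc n) = tprod (y) (tpow y n)"

definition tlog :: "(nat list \<Rightarrow> real) \<Rightarrow> nat list \<Rightarrow> real" where
  "tlog y w = (\<Sum>n. (-1) ^ n / real (Suc n) * tpow (\<lambda>v. y v - tunit v) (Suc n) w)"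

definition level_norm :: "nat \<Rightarrow> nat \<Rightarrow> (nat list \<Rightarrow> real) \<Rightarrow> real" where
  "level_norm d m x = sqrt (\<Sum>w\<in>{w. length w = m \<and> is_word d w}. (x w)\<^sup>2)"

definition is_partition :: "real \<Rightarrow> real list \<Rightarrow> bool" where
  "is_partition T ts \<longleftrightarrow> length ts \<ge> 2 \<and> hd ts = 0 \<and> last ts = T \<and> sorted_wrt (<) ts"

definition finite_pvar :: "nat \<Rightarrow> real \<Rightarrow> real \<Rightarrow> (real \<times> real \<Rightarrow> nat list \<Rightarrow> real) \<Rightarrow> bool" where
  "finite_pvar d p T x \<longleftrightarrow>
     (\<forall>m::nat. 1 \<le> m \<and> real m \<le> p \<longrightarrow>
        (\<exists>C. \<forall>ts. is_partition T ts \<longrightarrow>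
           (\<Sum>i<length ts - 1. level_norm d m (x (ts ! i, ts ! Suc i)) powr (p / real m)) \<le> C))"

definition weakly_geometric :: "nat \<Rightarrow> real \<Rightarrow> real \<Rightarrow> (real \<times> real \<Rightarrow> nat list \<Rightarrow> real) set" where
  "weakly_geometric d p T = {x.
     (\<forall>s t. 0 \<le> s \<and> s \<le> t \<and> t \<le> T \<longrightarrow>
        x (s, t) [] = 1 \<and>
        (\<forall>u v. is_word d u \<and> is_word d v \<longrightarrow>
            pair_words (x (s, t)) (shuffle u v) = x (s, t) u * x (s, t) v)) \<and>
     (\<forall>s t u. 0 \<le> s \<and> s \<le> t \<and> t \<le> u \<and> u \<le> T \<longrightarrow>
        (\<forall>w. is_word d w \<longrightarrow> tprod (x (s, t)) (x (t, u)) w = x (s, u) w)) \<and>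
     finite_pvar d p T x}"

definition exp_sig :: "'a measure \<Rightarrow> ('a \<Rightarrow> real \<times> real \<Rightarrow> nat list \<Rightarrow> real) \<Rightarrow> real \<Rightarrow> nat list \<Rightarrow> real" where
  "exp_sig M X T w = integral\<^sup>L M (\<lambda>\<omega>. X \<omega> (0, T) w)"

definition sig_cumulant :: "'a measure \<Rightarrow> ('a \<Rightarrow> real \<times> real \<Rightarrow> nat list \<Rightarrow> real) \<Rightarrow> real \<Rightarrow> nat list \<Rightarrow> real" where
  "sig_cumulant M X T = tlog (exp_sig M X T)"

text \<open>Word poset (0-based indices): (j,q) with j < k and q < length of the j-th word.\<close>
definition word_poset :: "'b list list \<Rightarrow> (nat \<times> nat) set" where
  "word_poset ts = {(j, q). j < length ts \<and> q < length (ts ! j)}"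

definition order_pres :: "(nat \<times> nat) set \<Rightarrow> (nat \<times> nat \<Rightarrow> nat) \<Rightarrow> bool" where
  "order_pres P f \<longleftrightarrow> (\<forall>j q q'. (j, q) \<in> P \<and> (j, q') \<in> P \<and> q \<le> q' \<longrightarrow> f (j, q) \<le> f (j, q'))"

definition kernel_of :: "(nat \<times> nat) set \<Rightarrow> (nat \<times> nat \<Rightarrow> nat) \<Rightarrow> (nat \<times> nat) set set" where
  "kernel_of P f = {{x \<in> P. f x = i} | i. i \<in> f ` P}"

definition Orp :: "'b list list \<Rightarrow> (nat \<times> nat) set set set" where
  "Orp ts = {kernel_of (word_poset ts) f | f. order_pres (word_poset ts) f}"

definition orp_fact :: "'b list list \<Rightarrow> (nat \<times> nat) set set \<Rightarrow> nat" where
  "orp_fact ts a = card {f \<in> word_poset ts \<rightarrow>\<^sub>E {1..card a}.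
      order_pres (word_poset ts) f \<and> kernel_of (word_poset ts) f = a}"

text \<open>e_{B^j}: letters of the j-th word at positions in B, in increasing order.\<close>
definition block_word :: "'b list list \<Rightarrow> (nat \<times> nat) set \<Rightarrow> nat \<Rightarrow> 'b list" where
  "block_word ts B j = map (\<lambda>q. ts ! j ! q) (sorted_list_of_set {q. (j, q) \<in> B})"

definition gen_moment :: "'a measure \<Rightarrow> ('a \<Rightarrow> real \<times> real \<Rightarrow> nat list \<Rightarrow> real) \<Rightarrow> real
    \<Rightarrow> nat list list \<Rightarrow> (nat \<times> nat) set set \<Rightarrow> real" where
  "gen_moment M X T ts a = (\<Prod>B\<in>a. integral\<^sup>L M (\<lambda>\<omega>.
      \<Prod>j\<in>{j. j < length ts \<and> (\<exists>q. (j, q) \<in> B)}. X \<omega> (0, T) (block_word ts B j)))"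

end

theory Submission
  imports Defs
begin

text \<open>Deconcatenation is compatible with shuffles, so pairing a tensor product with the
  shuffle product of the words \<open>\<tau>\<^sub>1, \<dots>, \<tau>\<^sub>k\<close> splits into a sum over cuts of the words. Iterating, the pairing of
  \<open>y\<^sup>\<otimes>\<^sup>n\<close> is a sum over the order-preserving maps \<open>f\<close> from the word poset to \<open>{1..n}\<close>, the
  \<open>m\<close>-th factor \<open>y\<close> being paired with the shuffle of the subwords in the fibre \<open>f\<^sup>-\<^sup>1(m)\<close>.
  For \<open>y = \<mu> - 1\<close> an empty fibre gives \<open>0\<close>, so only surjective \<open>f\<close> survive; on a nonempty
  fibre the shuffle property of each signature turns the pairing with \<open>\<mu>\<close> into the expectation
  of a product, which is one block of the generalised moment of \<open>ker f\<close>. The logarithm series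
  stops at the total length of the words, and grouping the surjections by their kernels
  produces the factor \<open>a!\<close> of each ordered partition \<open>a\<close>.\<close>

lemma sum_list_concat_map:
  "(\<Sum>w\<leftarrow>concat (map g xs). f w) = (\<Sum>x\<leftarrow>xs. \<Sum>w\<leftarrow>g x. (f w :: 'c::comm_monoid_add))"
  by (induction xs) auto

lemma sum_list_sum_swap:
  "(\<Sum>x\<leftarrow>xs. \<Sum>i\<in>A. f x i) = (\<Sum>i\<in>A. \<Sum>x\<leftarrow>xs. (f x i :: 'c::comm_monoid_add))"
  by (induction xs) (auto simp: sum.distrib)

lemma sum_list_swap:
  "(\<Sum>x\<leftarrow>xs. \<Sum>y\<leftarrow>ys. f x y) = (\<Sum>y\<leftarrow>ys. \<Sum>x\<leftarrow>xs. (f x y :: 'c::comm_monoid_add))"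
  by (induction xs) (auto simp: sum_list_addf)

lemma prod_atLeast1_atMost_Suc:
  "(\<Prod>m\<in>{1..Suc n}. a m) = a 1 * (\<Prod>m\<in>{1..n}. (a (Suc m) :: 'c::comm_monoid_mult))"
  by (simp only: One_nat_def prod.atLeast1_atMost_eq prod.lessThan_Suc_shift)

lemma pair_words_diff: "pair_words (\<lambda>v. a v - b v) ws = pair_words a ws - pair_words b ws"
  by (simp add: pair_words_def sum_list_subtractf)

lemma shuffle_Nil_right [simp]: "shuffle xs [] = [xs]"
  by (cases xs) auto

lemma length_shuffle: "w \<in> set (shuffle u v) \<Longrightarrow> length w = length u + length v"
  by (induction u v arbitrary: w rule: shuffle.induct) auto

lemma set_shuffle: "w \<in> set (shuffle u v) \<Longrightarrow> set w \<subseteq> set u \<union> set v"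
  by (induction u v arbitrary: w rule: shuffle.induct) fastforce+

lemma length_shuffle_many:
  "w \<in> set (shuffle_many ts) \<Longrightarrow> length w = sum_list (map length ts)"
  by (induction ts arbitrary: w) (auto dest: length_shuffle)

lemma set_shuffle_many:
  "w \<in> set (shuffle_many ts) \<Longrightarrow> set w \<subseteq> \<Union> (set ` set ts)"
  by (induction ts arbitrary: w) (fastforce dest: set_shuffle)+

lemma shuffle_many_all_Nil: "\<forall>t\<in>set ts. t = [] \<Longrightarrow> shuffle_many ts = [[]]"
  by (induction ts) auto

lemma pair_words_tunit_shuffle_many:
  "pair_words tunit (shuffle_many ts) = (if \<forall>t\<in>set ts. t = [] then 1 else 0)"
proof (cases "\<forall>t\<in>set ts. t = []")
  case False
  then obtain t where "t \<in> set ts" "t \<noteq> []" by blast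
  moreover have "length t \<le> sum_list (map length ts)"
    using \<open>t \<in> set ts\<close> by (intro member_le_sum_list) auto
  ultimately have "0 < sum_list (map length ts)"
    by (metis length_greater_0_conv less_le_trans)
  then have "tunit w = 0" if "w \<in> set (shuffle_many ts)" for w
    using length_shuffle_many[OF that] unfolding tunit_def by (metis length_0_conv less_irrefl)
  then have "pair_words tunit (shuffle_many ts) = (\<Sum>w\<leftarrow>shuffle_many ts. 0)"
    unfolding pair_words_def by (intro arg_cong[where f = sum_list] map_cong) auto
  with False show ?thesis by simp
qed (simp add: shuffle_many_all_Nil pair_words_def tunit_def)

definition deconcat_sum :: "('a list \<Rightarrow> 'a list \<Rightarrow> 'c::comm_monoid_add) \<Rightarrow> 'a list \<Rightarrow> 'c" where
  "deconcat_sum F w = (\<Sum>i\<le>length w. F (take i w) (drop i w))"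

lemma deconcat_sum_Cons:
  "deconcat_sum F (x # w) = F [] (x # w) + deconcat_sum (\<lambda>a. F (x # a)) w"
  unfolding deconcat_sum_def length_Cons sum.atMost_Suc_shift by simp

lemma sum_list_shuffle_deconcat_sum:
  "(\<Sum>w\<leftarrow>shuffle u v. deconcat_sum F w) =
   (\<Sum>i\<le>length u. \<Sum>j\<le>length v. \<Sum>w1\<leftarrow>shuffle (take i u) (take j v).
        \<Sum>w2\<leftarrow>shuffle (drop i u) (drop j v). F w1 w2)"
proof (induction u v arbitrary: F rule: shuffle.induct)
  case (3 x xs y ys)
  show ?case
    using "3.IH"(1)[of "\<lambda>a. F (x # a)"] "3.IH"(2)[of "\<lambda>a. F (y # a)"]
    by (simp add: deconcat_sum_Cons sum_list_addf sum.atMost_Suc_shift sum.distrib comp_def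
        del: sum.atMost_Suc) (simp add: add_ac)
qed (simp_all add: deconcat_sum_def)

definition cut_vectors :: "'a list list \<Rightarrow> nat list set" where
  "cut_vectors ts = {c. length c = length ts \<and> (\<forall>j<length ts. c ! j \<le> length (ts ! j))}"

lemma cut_vectors_Nil [simp]: "cut_vectors [] = {[]}"
  by (auto simp: cut_vectors_def)

lemma cut_vectors_Cons:
  "cut_vectors (t # ts) = (\<lambda>(i, c). i # c) ` ({..length t} \<times> cut_vectors ts)"
proof (intro set_eqI iffI)
  fix c assume "c \<in> cut_vectors (t # ts)"
  then show "c \<in> (\<lambda>(i, c). i # c) ` ({..length t} \<times> cut_vectors ts)"
    by (cases c) (force simp: cut_vectors_def)+
qed (auto simp: cut_vectors_def nth_Cons split: nat.splits)

lemma finite_cut_vectors: "finite (cut_vectors ts)"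
  by (induction ts) (simp_all add: cut_vectors_Cons)

lemma sum_cut_vectors_Cons:
  "(\<Sum>c\<in>cut_vectors (t # ts). h c) = (\<Sum>i\<le>length t. \<Sum>c\<in>cut_vectors ts. h (i # c))"
proof -
  have "inj_on (\<lambda>(i, c). i # c) ({..length t} \<times> cut_vectors ts)"
    by (auto simp: inj_on_def)
  then show ?thesis
    by (simp add: cut_vectors_Cons sum.reindex sum.cartesian_product finite_cut_vectors split_def)
qed

lemma sum_list_shuffle_many_deconcat_sum:
  "(\<Sum>w\<leftarrow>shuffle_many ts. deconcat_sum F w) =
   (\<Sum>c\<in>cut_vectors ts. \<Sum>w1\<leftarrow>shuffle_many (map2 take c ts).
        \<Sum>w2\<leftarrow>shuffle_many (map2 drop c ts). (F w1 w2 :: 'c::comm_monoid_add))"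
proof (induction ts arbitrary: F)
  case Nil
  then show ?case by (simp add: deconcat_sum_def)
next
  case (Cons t ts)
  define G where "G i a b = (\<Sum>w1\<leftarrow>shuffle (take i t) a. \<Sum>w2\<leftarrow>shuffle (drop i t) b. F w1 w2)"
    for i a b
  have "(\<Sum>w\<leftarrow>shuffle_many (t # ts). deconcat_sum F w)
      = (\<Sum>x\<leftarrow>shuffle_many ts. \<Sum>i\<le>length t. deconcat_sum (G i) x)"
    by (simp only: shuffle_many.simps sum_list_concat_map sum_list_shuffle_deconcat_sum)
      (simp add: G_def deconcat_sum_def)
  also have "\<dots> = (\<Sum>i\<le>length t. \<Sum>c\<in>cut_vectors ts. \<Sum>a\<leftarrow>shuffle_many (map2 take c ts).
        \<Sum>b\<leftarrow>shuffle_many (map2 drop c ts). G i a b)"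
    by (simp add: sum_list_sum_swap Cons.IH)
  also have "\<dots> = (\<Sum>c\<in>cut_vectors (t # ts). \<Sum>w1\<leftarrow>shuffle_many (map2 take c (t # ts)).
        \<Sum>w2\<leftarrow>shuffle_many (map2 drop c (t # ts)). F w1 w2)"
  proof -
    have "(\<Sum>w1\<leftarrow>shuffle_many (take i t # as). \<Sum>w2\<leftarrow>shuffle_many (drop i t # bs). F w1 w2)
      = (\<Sum>a\<leftarrow>shuffle_many as. \<Sum>b\<leftarrow>shuffle_many bs. G i a b)" for i as bs
      unfolding G_def shuffle_many.simps sum_list_concat_map by (subst sum_list_swap) (rule refl)
    then show ?thesis
      by (simp add: sum_cut_vectors_Cons)
  qed
  finally show ?case .
qed

lemma pair_words_tprod_shuffle_many:
  "pair_words (tprod a b) (shuffle_many ts) =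
   (\<Sum>c\<in>cut_vectors ts. pair_words a (shuffle_many (map2 take c ts))
                        * pair_words b (shuffle_many (map2 drop c ts)))"
proof -
  have "tprod a b = deconcat_sum (\<lambda>u v. a u * b v)"
    by (simp add: fun_eq_iff tprod_def deconcat_sum_def)
  then show ?thesis
    by (simp add: pair_words_def sum_list_shuffle_many_deconcat_sum
        sum_list_const_mult sum_list_mult_const)
qed

definition order_maps :: "nat \<Rightarrow> 'a list list \<Rightarrow> (nat \<times> nat \<Rightarrow> nat) set" where
  "order_maps n ts = {f \<in> word_poset ts \<rightarrow>\<^sub>E {1..n}. order_pres (word_poset ts) f}"

lemma finite_word_poset: "finite (word_poset ts)"
proof -
  have "word_poset ts = (SIGMA j:{..<length ts}. {..<length (ts ! j)})"
    by (auto simp: word_poset_def)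
  then show ?thesis by simp
qed

lemma finite_order_maps: "finite (order_maps n ts)"
proof -
  have "finite (word_poset ts \<rightarrow>\<^sub>E {1..n})"
    by (simp add: finite_PiE finite_word_poset)
  then show ?thesis unfolding order_maps_def by (rule finite_subset[rotated]) auto
qed

lemma order_mapsD:
  assumes "f \<in> order_maps n ts" "(j, q) \<in> word_poset ts"
  shows "f (j, q) \<in> {1..n}"
  using assms by (auto simp: order_maps_def)

lemma order_maps_mono:
  assumes "f \<in> order_maps n ts" "(j, q') \<in> word_poset ts" "q \<le> q'"
  shows "f (j, q) \<le> f (j, q')"
proof -
  have "(j, q) \<in> word_poset ts" using assms(2,3) by (auto simp: word_poset_def)
  then show ?thesis using assms by (auto simp: order_maps_def order_pres_def)
qed

lemma word_poset_map2_drop: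
  "c \<in> cut_vectors ts \<Longrightarrow>
     word_poset (map2 drop c ts) = {(j, q). j < length ts \<and> q + c ! j < length (ts ! j)}"
  by (auto simp: word_poset_def cut_vectors_def)

text \<open>An order-preserving map into \<open>{1..n+1}\<close> is the same as a cut vector \<open>c\<close> (the prefixes
  sent to \<open>1\<close>) together with an order-preserving map of the suffixes into \<open>{1..n}\<close>.\<close>

definition lift_order_map ::
    "'a list list \<Rightarrow> nat list \<Rightarrow> (nat \<times> nat \<Rightarrow> nat) \<Rightarrow> nat \<times> nat \<Rightarrow> nat" where
  "lift_order_map ts c g = (\<lambda>(j, q). if (j, q) \<in> word_poset ts
      then (if q < c ! j then 1 else Suc (g (j, q - c ! j))) else undefined)"

lemma lift_order_map_in:
  assumes c: "c \<in> cut_vectors ts" and g: "g \<in> order_maps n (map2 drop c ts)"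
  shows "lift_order_map ts c g \<in> order_maps (Suc n) ts"
proof -
  have suffix: "(j, q - c ! j) \<in> word_poset (map2 drop c ts)"
    if "(j, q) \<in> word_poset ts" "\<not> q < c ! j" for j q
    unfolding word_poset_map2_drop[OF c] using that by (auto simp: word_poset_def)
  have "lift_order_map ts c g \<in> word_poset ts \<rightarrow>\<^sub>E {1..Suc n}"
    using order_mapsD[OF g suffix] by (auto simp: lift_order_map_def PiE_def extensional_def)
  moreover have "lift_order_map ts c g (j, q) \<le> lift_order_map ts c g (j, q')"
    if "(j, q) \<in> word_poset ts" "(j, q') \<in> word_poset ts" "q \<le> q'" for j q q'
    using that order_maps_mono[OF g suffix[OF that(2)], of "q - c ! j"]
    by (auto simp: lift_order_map_def)
  ultimately show ?thesis by (simp add: order_maps_def order_pres_def)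
qed

lemma lift_order_map_eq_1_iff:
  assumes c: "c \<in> cut_vectors ts" and g: "g \<in> order_maps n (map2 drop c ts)"
    and jq: "(j, q) \<in> word_poset ts"
  shows "lift_order_map ts c g (j, q) = 1 \<longleftrightarrow> q < c ! j"
proof (cases "q < c ! j")
  case False
  then have "(j, q - c ! j) \<in> word_poset (map2 drop c ts)"
    unfolding word_poset_map2_drop[OF c] using jq by (auto simp: word_poset_def)
  then show ?thesis using order_mapsD[OF g] jq False by (force simp: lift_order_map_def)
qed (use jq in \<open>simp add: lift_order_map_def\<close>)

lemma inj_on_lift_order_map:
  "inj_on (\<lambda>(c, g). lift_order_map ts c g) (SIGMA c:cut_vectors ts. order_maps n (map2 drop c ts))"
proof (rule inj_onI, clarify)
  fix c g c' g'
  assume c: "c \<in> cut_vectors ts" and g: "g \<in> order_maps n (map2 drop c ts)"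
    and c': "c' \<in> cut_vectors ts" and g': "g' \<in> order_maps n (map2 drop c' ts)"
    and eq: "lift_order_map ts c g = lift_order_map ts c' g'"
  have "c ! j = c' ! j" if j: "j < length ts" for j
  proof (rule ccontr)
    assume ne: "c ! j \<noteq> c' ! j"
    define q where "q = min (c ! j) (c' ! j)"
    have "c ! j \<le> length (ts ! j)" "c' ! j \<le> length (ts ! j)"
      using c c' j by (auto simp: cut_vectors_def)
    then have "(j, q) \<in> word_poset ts"
      using j ne by (auto simp: q_def word_poset_def)
    then have "q < c ! j \<longleftrightarrow> q < c' ! j"
      using lift_order_map_eq_1_iff[OF c g] lift_order_map_eq_1_iff[OF c' g'] eq by metis
    then show False using ne by (auto simp: q_def)
  qed
  then have cc: "c = c'" using c c' by (auto simp: cut_vectors_def intro: nth_equalityI)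
  have "g (j, q) = g' (j, q)" for j q
  proof (cases "(j, q) \<in> word_poset (map2 drop c ts)")
    case True
    then have "(j, q + c ! j) \<in> word_poset ts"
      unfolding word_poset_map2_drop[OF c] by (auto simp: word_poset_def)
    then show ?thesis
      using fun_cong[OF eq, of "(j, q + c ! j)"] cc by (simp add: lift_order_map_def)
  next
    case False
    then show ?thesis using g g' cc by (auto simp: order_maps_def PiE_def extensional_def)
  qed
  then show "c = c' \<and> g = g'" using cc by auto
qed

lemma order_map_level_one_prefix:
  assumes f: "f \<in> order_maps (Suc n) ts" and j: "j < length ts"
  obtains c where "c \<le> length (ts ! j)" "\<And>q. q < length (ts ! j) \<Longrightarrow> f (j, q) = 1 \<longleftrightarrow> q < c"
proof
  define c where "c = (LEAST q. q = length (ts ! j) \<or> f (j, q) \<noteq> 1)"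
  show le: "c \<le> length (ts ! j)"
    unfolding c_def by (rule Least_le) simp
  show "f (j, q) = 1 \<longleftrightarrow> q < c" if q: "q < length (ts ! j)" for q
  proof
    assume "f (j, q) = 1"
    show "q < c"
    proof (rule ccontr)
      assume "\<not> q < c"
      have "c \<noteq> length (ts ! j)" using \<open>\<not> q < c\<close> q by simp
      then have "f (j, c) \<noteq> 1"
        using LeastI[of "\<lambda>q. q = length (ts ! j) \<or> f (j, q) \<noteq> 1" "length (ts ! j)"]
        by (simp add: c_def)
      moreover have "(j, c) \<in> word_poset ts" "(j, q) \<in> word_poset ts"
        using \<open>\<not> q < c\<close> q j by (auto simp: word_poset_def)
      ultimately show False
        using order_maps_mono[OF f, of j q c] order_mapsD[OF f, of j c] \<open>f (j, q) = 1\<close> \<open>\<not> q < c\<close>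
        by simp
    qed
  next
    assume "q < c"
    then show "f (j, q) = 1"
      using not_less_Least[of q "\<lambda>q. q = length (ts ! j) \<or> f (j, q) \<noteq> 1"] q
      by (simp add: c_def)
  qed
qed

lemma order_map_level_one_cut:
  assumes f: "f \<in> order_maps (Suc n) ts"
  obtains c where "c \<in> cut_vectors ts"
    "\<And>j q. (j, q) \<in> word_poset ts \<Longrightarrow> f (j, q) = 1 \<longleftrightarrow> q < c ! j"
proof -
  have "\<forall>j\<in>{..<length ts}. \<exists>c. c \<le> length (ts ! j) \<and>
      (\<forall>q<length (ts ! j). f (j, q) = 1 \<longleftrightarrow> q < c)"
    using order_map_level_one_prefix[OF f] by (metis lessThan_iff)
  then obtain cf where cf: "\<And>j. j < length ts \<Longrightarrow> cf j \<le> length (ts ! j) \<and>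
      (\<forall>q<length (ts ! j). f (j, q) = 1 \<longleftrightarrow> q < cf j)"
    by (metis lessThan_iff)
  show ?thesis
    by (rule that[of "map cf [0..<length ts]"])
      (use cf in \<open>auto simp: cut_vectors_def word_poset_def\<close>)
qed

definition lower_order_map ::
    "'a list list \<Rightarrow> nat list \<Rightarrow> (nat \<times> nat \<Rightarrow> nat) \<Rightarrow> nat \<times> nat \<Rightarrow> nat" where
  "lower_order_map ts c f = (\<lambda>(j, q). if (j, q) \<in> word_poset (map2 drop c ts)
      then f (j, q + c ! j) - 1 else undefined)"

context
  fixes ts :: "'a list list" and c :: "nat list" and f :: "nat \<times> nat \<Rightarrow> nat" and n :: nat
  assumes c: "c \<in> cut_vectors ts" and f: "f \<in> order_maps (Suc n) ts"
    and level_one: "\<And>j q. (j, q) \<in> word_poset ts \<Longrightarrow> f (j, q) = 1 \<longleftrightarrow> q < c ! j"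
begin

lemma lower_order_map_in: "lower_order_map ts c f \<in> order_maps n (map2 drop c ts)"
proof -
  have shift: "(j, q + c ! j) \<in> word_poset ts \<and> f (j, q + c ! j) \<in> {2..Suc n}"
    if "(j, q) \<in> word_poset (map2 drop c ts)" for j q
  proof -
    have "(j, q + c ! j) \<in> word_poset ts"
      using that unfolding word_poset_map2_drop[OF c] by (auto simp: word_poset_def)
    then show ?thesis using level_one order_mapsD[OF f] by fastforce
  qed
  have "lower_order_map ts c f \<in> word_poset (map2 drop c ts) \<rightarrow>\<^sub>E {1..n}"
    using shift by (fastforce simp: lower_order_map_def PiE_def extensional_def)
  moreover have "lower_order_map ts c f (j, q) \<le> lower_order_map ts c f (j, q')"
    if "(j, q) \<in> word_poset (map2 drop c ts)" "(j, q') \<in> word_poset (map2 drop c ts)" "q \<le> q'"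
    for j q q'
    using that shift[OF that(2)] order_maps_mono[OF f, of j "q' + c ! j" "q + c ! j"]
    by (simp add: lower_order_map_def diff_le_mono)
  ultimately show ?thesis by (simp add: order_maps_def order_pres_def)
qed

lemma lift_lower_order_map: "lift_order_map ts c (lower_order_map ts c f) = f"
proof
  fix x :: "nat \<times> nat"
  obtain j q where x: "x = (j, q)" by (cases x)
  show "lift_order_map ts c (lower_order_map ts c f) x = f x"
  proof (cases "x \<in> word_poset ts")
    case True
    moreover have "(j, q - c ! j) \<in> word_poset (map2 drop c ts)" if "\<not> q < c ! j"
      using True that unfolding x word_poset_map2_drop[OF c] by (auto simp: word_poset_def)
    ultimately show ?thesis
      using level_one[of j q] order_mapsD[OF f, of j q]
      by (auto simp: x lift_order_map_def lower_order_map_def)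
  next
    case False
    then show ?thesis
      using f by (auto simp: x lift_order_map_def order_maps_def PiE_def extensional_def)
  qed
qed

end

lemma order_maps_Suc_eq_image_lift:
  "order_maps (Suc n) ts =
     (\<lambda>(c, g). lift_order_map ts c g) ` (SIGMA c:cut_vectors ts. order_maps n (map2 drop c ts))"
proof (intro set_eqI iffI)
  fix f assume f: "f \<in> order_maps (Suc n) ts"
  obtain c where c: "c \<in> cut_vectors ts"
    and level_one: "\<And>j q. (j, q) \<in> word_poset ts \<Longrightarrow> f (j, q) = 1 \<longleftrightarrow> q < c ! j"
    using order_map_level_one_cut[OF f] by blast
  show "f \<in> (\<lambda>(c, g). lift_order_map ts c g) `
      (SIGMA c:cut_vectors ts. order_maps n (map2 drop c ts))"
    using lift_lower_order_map[OF c f level_one] lower_order_map_in[OF c f level_one] c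
    by (intro image_eqI[of _ _ "(c, lower_order_map ts c f)"]) auto
qed (auto intro: lift_order_map_in)

definition fibre_words :: "'a list list \<Rightarrow> (nat \<times> nat \<Rightarrow> nat) \<Rightarrow> nat \<Rightarrow> 'a list list" where
  "fibre_words ts f m = map (block_word ts {x \<in> word_poset ts. f x = m}) [0..<length ts]"

lemma length_fibre_words [simp]: "length (fibre_words ts f m) = length ts"
  by (simp add: fibre_words_def)

lemma sorted_list_of_set_filter_upt:
  "sorted_list_of_set {q. q < n \<and> P q} = filter P [0..<n]"
  by (rule sorted_distinct_set_unique) (auto intro: sorted_wrt_filter)

lemma fibre_words_nth:
  "j < length ts \<Longrightarrow>
     fibre_words ts f m ! j =
       map (\<lambda>q. ts ! j ! q) (filter (\<lambda>q. f (j, q) = m) [0..<length (ts ! j)])"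
proof -
  assume j: "j < length ts"
  then have "{q. (j, q) \<in> {x \<in> word_poset ts. f x = m}} = {q. q < length (ts ! j) \<and> f (j, q) = m}"
    by (auto simp: word_poset_def)
  then show ?thesis
    using j by (simp add: fibre_words_def block_word_def sorted_list_of_set_filter_upt)
qed

lemma fibre_words_lift_order_map_1:
  assumes c: "c \<in> cut_vectors ts" and g: "g \<in> order_maps n (map2 drop c ts)"
  shows "fibre_words ts (lift_order_map ts c g) 1 = map2 take c ts"
proof (rule nth_equalityI)
  show "length (fibre_words ts (lift_order_map ts c g) 1) = length (map2 take c ts)"
    using c by (simp add: cut_vectors_def)
next
  fix j assume "j < length (fibre_words ts (lift_order_map ts c g) 1)"
  then have j: "j < length ts" by simp
  have cj: "c ! j \<le> length (ts ! j)" using c j by (simp add: cut_vectors_def)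
  have "filter (\<lambda>q. lift_order_map ts c g (j, q) = 1) [0..<length (ts ! j)]
      = filter (\<lambda>q. q < c ! j) [0..<length (ts ! j)]"
    by (rule filter_cong) (use lift_order_map_eq_1_iff[OF c g] j in \<open>auto simp: word_poset_def\<close>)
  also have "\<dots> = [0..<c ! j]"
  proof -
    have "[0..<length (ts ! j)] = [0..<c ! j] @ [c ! j..<length (ts ! j)]"
      using cj by (metis le_add_diff_inverse upt_add_eq_append zero_le)
    then show ?thesis by (simp add: filter_id_conv)
  qed
  moreover have "map (\<lambda>q. ts ! j ! q) [0..<c ! j] = take (c ! j) (ts ! j)"
    using cj by (intro map_upt_eqI) auto
  ultimately show "fibre_words ts (lift_order_map ts c g) 1 ! j = map2 take c ts ! j"
    using j c by (simp add: fibre_words_nth cut_vectors_def)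
qed

lemma fibre_words_lift_order_map_Suc:
  assumes c: "c \<in> cut_vectors ts" and m: "m \<ge> 1"
  shows "fibre_words ts (lift_order_map ts c g) (Suc m) = fibre_words (map2 drop c ts) g m"
proof (rule nth_equalityI)
  show "length (fibre_words ts (lift_order_map ts c g) (Suc m)) =
      length (fibre_words (map2 drop c ts) g m)"
    using c by (simp add: cut_vectors_def)
next
  fix j assume "j < length (fibre_words ts (lift_order_map ts c g) (Suc m))"
  then have j: "j < length ts" by simp
  define k where "k = c ! j"
  define L where "L = length (ts ! j)"
  have kL: "k \<le> L" using c j by (simp add: cut_vectors_def k_def L_def)
  have split: "[0..<L] = [0..<k] @ map (\<lambda>i. i + k) [0..<L - k]"
    using kL by (simp add: map_add_upt) (metis le_add_diff_inverse upt_add_eq_append zero_le)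
  have prefix: "filter (\<lambda>q. lift_order_map ts c g (j, q) = Suc m) [0..<k] = []"
    using j kL m by (auto simp: filter_empty_conv lift_order_map_def word_poset_def k_def L_def)
  have suffix: "filter (\<lambda>q. lift_order_map ts c g (j, q) = Suc m) (map (\<lambda>i. i + k) [0..<L - k])
      = map (\<lambda>i. i + k) (filter (\<lambda>i. g (j, i) = m) [0..<L - k])"
    unfolding filter_map
    by (rule arg_cong[where f = "map _"], rule filter_cong)
       (use j in \<open>auto simp: lift_order_map_def word_poset_def k_def L_def\<close>)
  have "fibre_words ts (lift_order_map ts c g) (Suc m) ! j
      = map (\<lambda>i. drop k (ts ! j) ! i) (filter (\<lambda>i. g (j, i) = m) [0..<L - k])"
    using j kL by (simp add: fibre_words_nth L_def[symmetric] split prefix suffix add.commute)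
  also have "\<dots> = fibre_words (map2 drop c ts) g m ! j"
    using j c by (simp add: fibre_words_nth cut_vectors_def k_def L_def)
  finally show "fibre_words ts (lift_order_map ts c g) (Suc m) ! j =
      fibre_words (map2 drop c ts) g m ! j" .
qed

lemma word_poset_eq_empty_iff: "word_poset ts = {} \<longleftrightarrow> (\<forall>t\<in>set ts. t = [])"
proof
  assume empty: "word_poset ts = {}"
  show "\<forall>t\<in>set ts. t = []"
  proof
    fix t assume "t \<in> set ts"
    then obtain j where "j < length ts" "ts ! j = t" by (auto simp: in_set_conv_nth)
    then have "t \<noteq> [] \<Longrightarrow> (j, 0) \<in> word_poset ts" by (auto simp: word_poset_def)
    then show "t = []" using empty by blast
  qed
next
  assume "\<forall>t\<in>set ts. t = []"
  then have "ts ! j = []" if "j < length ts" for j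
    using that nth_mem by blast
  then show "word_poset ts = {}" by (auto simp: word_poset_def)
qed

lemma order_maps_0:
  "order_maps 0 ts = (if word_poset ts = {} then {\<lambda>_. undefined} else {})"
proof (cases "word_poset ts = {}")
  case False
  then have "word_poset ts \<rightarrow>\<^sub>E {1..0::nat} = {}" by (auto simp: PiE_eq_empty_iff)
  then show ?thesis using False by (simp add: order_maps_def)
qed (simp add: order_maps_def order_pres_def)

lemma pair_words_tpow_shuffle_many:
  "pair_words (tpow y n) (shuffle_many ts) =
   (\<Sum>f\<in>order_maps n ts. \<Prod>m\<in>{1..n}. pair_words y (shuffle_many (fibre_words ts f m)))"
proof (induction n arbitrary: ts)
  case 0
  show ?case
    by (simp add: order_maps_0 word_poset_eq_empty_iff pair_words_tunit_shuffle_many)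
next
  case (Suc n)
  define H where "H f = (\<Prod>m\<in>{1..Suc n}. pair_words y (shuffle_many (fibre_words ts f m)))" for f
  have H_lift: "H (lift_order_map ts c g) = pair_words y (shuffle_many (map2 take c ts))
      * (\<Prod>m\<in>{1..n}. pair_words y (shuffle_many (fibre_words (map2 drop c ts) g m)))"
    if c: "c \<in> cut_vectors ts" and g: "g \<in> order_maps n (map2 drop c ts)" for c g
  proof -
    have "(\<Prod>m\<in>{1..n}. pair_words y (shuffle_many (fibre_words ts (lift_order_map ts c g) (Suc m))))
        = (\<Prod>m\<in>{1..n}. pair_words y (shuffle_many (fibre_words (map2 drop c ts) g m)))"
      by (rule prod.cong) (simp_all add: fibre_words_lift_order_map_Suc[OF c])
    then show ?thesis
      unfolding H_def prod_atLeast1_atMost_Suc fibre_words_lift_order_map_1[OF c g]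
      by (rule arg_cong)
  qed
  have "pair_words (tpow y (Suc n)) (shuffle_many ts)
      = (\<Sum>c\<in>cut_vectors ts. \<Sum>g\<in>order_maps n (map2 drop c ts). H (lift_order_map ts c g))"
    by (simp add: pair_words_tprod_shuffle_many Suc.IH sum_distrib_left H_lift)
  also have "\<dots> = (\<Sum>(c, g)\<in>(SIGMA c:cut_vectors ts. order_maps n (map2 drop c ts)).
      H (lift_order_map ts c g))"
    by (rule sum.Sigma) (auto simp: finite_cut_vectors finite_order_maps)
  also have "\<dots> = (\<Sum>f\<in>order_maps (Suc n) ts. H f)"
    unfolding order_maps_Suc_eq_image_lift
    by (subst sum.reindex[OF inj_on_lift_order_map]) (simp add: split_def)
  finally show ?case unfolding H_def .
qed

lemma tpow_eq_0_if_length_less: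
  assumes "y [] = 0" "length w < n"
  shows "tpow y n w = 0"
  using assms(2)
proof (induction n arbitrary: w)
  case (Suc n)
  have "y (take i w) * tpow y n (drop i w) = 0" if "i \<le> length w" for i
    using that Suc by (cases "i = 0") (simp_all add: assms(1))
  then show ?case by (auto simp: tprod_def intro!: sum.neutral)
qed simp

lemma tlog_eq_sum:
  assumes "y [] = 1" "length w \<le> N"
  shows "tlog y w = (\<Sum>n\<le>N. (-1) ^ (n - 1) / real n * tpow (\<lambda>v. y v - tunit v) n w)"
proof -
  have "tlog y w = (\<Sum>n<N. (-1) ^ n / real (Suc n) * tpow (\<lambda>v. y v - tunit v) (Suc n) w)"
    unfolding tlog_def
  proof (rule suminf_finite)
    fix n assume "n \<notin> {..<N}"
    then have "tpow (\<lambda>v. y v - tunit v) (Suc n) w = 0"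
      using assms by (intro tpow_eq_0_if_length_less) (auto simp: tunit_def)
    then show "(-1) ^ n / real (Suc n) * tpow (\<lambda>v. y v - tunit v) (Suc n) w = 0"
      by simp
  qed simp
  then show ?thesis by (simp add: sum.atMost_shift)
qed

definition surj_order_maps :: "nat \<Rightarrow> 'a list list \<Rightarrow> (nat \<times> nat \<Rightarrow> nat) set" where
  "surj_order_maps n ts = {f \<in> order_maps n ts. f ` word_poset ts = {1..n}}"

lemma kernel_of_eq_image: "kernel_of P f = (\<lambda>i. {x \<in> P. f x = i}) ` f ` P"
  by (auto simp: kernel_of_def)

lemma inj_on_fibres: "inj_on (\<lambda>i. {x \<in> P. f x = i}) (f ` P)"
  by (rule inj_onI) blast

lemma card_kernel_of: "finite P \<Longrightarrow> card (kernel_of P f) = card (f ` P)"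
  by (simp add: kernel_of_eq_image card_image inj_on_fibres)

lemma card_word_poset: "card (word_poset ts) = sum_list (map length ts)"
proof -
  have "word_poset ts = (SIGMA j:{..<length ts}. {..<length (ts ! j)})"
    by (auto simp: word_poset_def)
  then show ?thesis by (simp add: sum_list_sum_nth atLeast0LessThan)
qed

lemma finite_Orp: "finite (Orp ts)"
proof -
  have "Orp ts \<subseteq> Pow (Pow (word_poset ts))"
    by (auto simp: Orp_def kernel_of_def)
  then show ?thesis by (rule finite_subset) (simp add: finite_word_poset)
qed

lemma card_kernel_of_surj_order_map:
  "f \<in> surj_order_maps n ts \<Longrightarrow> card (kernel_of (word_poset ts) f) = n"
  by (simp add: surj_order_maps_def card_kernel_of finite_word_poset)

lemma surj_order_maps_le_card:
  "f \<in> surj_order_maps n ts \<Longrightarrow> n \<le> card (word_poset ts)"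
  using card_image_le[OF finite_word_poset, of f ts] by (simp add: surj_order_maps_def)

lemma orp_fact_eq_card_surj_order_maps:
  "orp_fact ts a = card {f \<in> surj_order_maps (card a) ts. kernel_of (word_poset ts) f = a}"
proof -
  have "f \<in> surj_order_maps (card a) ts"
    if f: "f \<in> word_poset ts \<rightarrow>\<^sub>E {1..card a}" "kernel_of (word_poset ts) f = a"
      "order_pres (word_poset ts) f" for f
  proof -
    have "card (f ` word_poset ts) = card {1..card a}"
      using f(2) card_kernel_of[OF finite_word_poset, of ts f] by simp
    then have "f ` word_poset ts = {1..card a}"
      using f(1) by (intro card_subset_eq) auto
    then show ?thesis using f by (simp add: surj_order_maps_def order_maps_def)
  qed
  then show ?thesis
    unfolding orp_fact_def
    by (intro arg_cong[where f = card]) (auto simp: surj_order_maps_def order_maps_def)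
qed

lemma sum_Orp_eq_sum_surj_order_maps:
  "(\<Sum>a\<in>Orp ts. of_nat (orp_fact ts a) * F (card a) a) =
   (\<Sum>n\<le>card (word_poset ts). \<Sum>f\<in>surj_order_maps n ts.
      (F n (kernel_of (word_poset ts) f) :: 'c::comm_semiring_1))"
proof -
  let ?K = "kernel_of (word_poset ts)"
  define U where "U = (\<Union>n\<le>card (word_poset ts). surj_order_maps n ts)"
  have finite_surj: "finite (surj_order_maps n ts)" for n
    using finite_order_maps by (rule finite_subset[rotated]) (auto simp: surj_order_maps_def)
  have "(\<Sum>n\<le>card (word_poset ts). \<Sum>f\<in>surj_order_maps n ts. F n (?K f))
      = (\<Sum>n\<le>card (word_poset ts). \<Sum>f\<in>surj_order_maps n ts. F (card (?K f)) (?K f))"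
    by (intro sum.cong refl) (simp add: card_kernel_of_surj_order_map)
  also have "\<dots> = (\<Sum>f\<in>U. F (card (?K f)) (?K f))"
  proof -
    have "surj_order_maps i ts \<inter> surj_order_maps j ts = {}" if "i \<noteq> j" for i j
      using card_kernel_of_surj_order_map[of _ i ts] card_kernel_of_surj_order_map[of _ j ts] that
      by blast
    then show ?thesis
      unfolding U_def by (intro sum.UNION_disjoint[symmetric]) (auto simp: finite_surj)
  qed
  also have "\<dots> = (\<Sum>a\<in>Orp ts. \<Sum>f\<in>{f \<in> U. ?K f = a}. F (card (?K f)) (?K f))"
  proof (rule sum.group[symmetric])
    show "finite U" by (simp add: U_def finite_surj)
    show "?K ` U \<subseteq> Orp ts"
      by (auto simp: U_def Orp_def surj_order_maps_def order_maps_def)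
  qed (rule finite_Orp)
  also have "\<dots> = (\<Sum>a\<in>Orp ts. of_nat (orp_fact ts a) * F (card a) a)"
  proof (rule sum.cong[OF refl])
    fix a assume "a \<in> Orp ts"
    have "{f \<in> U. ?K f = a} = {f \<in> surj_order_maps (card a) ts. ?K f = a}"
      using card_kernel_of_surj_order_map surj_order_maps_le_card by (fastforce simp: U_def)
    then show "(\<Sum>f\<in>{f \<in> U. ?K f = a}. F (card (?K f)) (?K f)) =
        of_nat (orp_fact ts a) * F (card a) a"
      by (simp add: orp_fact_eq_card_surj_order_maps)
  qed
  finally show ?thesis ..
qed

lemma fibre_words_all_Nil_iff:
  "(\<forall>u\<in>set (fibre_words ts f m). u = []) \<longleftrightarrow> m \<notin> f ` word_poset ts"
proof -
  have "fibre_words ts f m ! j = [] \<longleftrightarrow> (\<forall>q<length (ts ! j). f (j, q) \<noteq> m)" if "j < length ts" for j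
    using that by (auto simp: fibre_words_nth filter_empty_conv)
  then show ?thesis by (auto simp: all_set_conv_all_nth word_poset_def)
qed

lemma is_word_fibre_words:
  assumes "\<forall>t\<in>set ts. is_word d t" "u \<in> set (fibre_words ts f m)"
  shows "is_word d u"
proof -
  obtain j where "j < length ts" "u = fibre_words ts f m ! j"
    using assms(2) by (auto simp: in_set_conv_nth)
  then have "set u \<subseteq> set (ts ! j)" "is_word d (ts ! j)"
    using assms(1) by (auto simp: fibre_words_nth)
  then show ?thesis by (auto simp: is_word_def)
qed

lemma prod_block_words:
  assumes "x [] = 1"
  shows "(\<Prod>j\<in>{j. j < length ts \<and> (\<exists>q. (j, q) \<in> B)}. x (block_word ts B j)) =
    prod_list (map (\<lambda>j. x (block_word ts B j)) [0..<length ts])"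
proof -
  have "block_word ts B j = []" if "\<not> (\<exists>q. (j, q) \<in> B)" for j
    using that by (simp add: block_word_def)
  then have "(\<Prod>j\<in>{j. j < length ts \<and> (\<exists>q. (j, q) \<in> B)}. x (block_word ts B j)) =
      (\<Prod>j\<in>{0..<length ts}. x (block_word ts B j))"
    using assms by (intro prod.mono_neutral_left) auto
  then show ?thesis
    using prod.distinct_set_conv_list[of "[0..<length ts]" "\<lambda>j. x (block_word ts B j)"] by simp
qed

definition shuffle_character :: "nat \<Rightarrow> (nat list \<Rightarrow> real) \<Rightarrow> bool" where
  "shuffle_character d x \<longleftrightarrow> x [] = 1 \<and>
     (\<forall>u v. is_word d u \<and> is_word d v \<longrightarrow> pair_words x (shuffle u v) = x u * x v)"

lemma weakly_geometric_shuffle_character: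
  "x \<in> weakly_geometric d p T \<Longrightarrow> 0 \<le> s \<Longrightarrow> s \<le> t \<Longrightarrow> t \<le> T \<Longrightarrow>
     shuffle_character d (x (s, t))"
  by (simp add: weakly_geometric_def shuffle_character_def)

lemma is_word_shuffle_many:
  "\<forall>u\<in>set us. is_word d u \<Longrightarrow> w \<in> set (shuffle_many us) \<Longrightarrow> is_word d w"
  using set_shuffle_many[of w us] by (auto simp: is_word_def)

lemma shuffle_character_pair_shuffle_many:
  assumes x: "shuffle_character d x" and us: "\<forall>u\<in>set us. is_word d u"
  shows "pair_words x (shuffle_many us) = prod_list (map x us)"
  using us
proof (induction us)
  case Nil
  then show ?case using x by (simp add: shuffle_character_def pair_words_def)
next
  case (Cons u us)
  have "pair_words x (shuffle u w) = x u * x w" if "w \<in> set (shuffle_many us)" for w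
    using x Cons.prems is_word_shuffle_many[OF _ that] by (simp add: shuffle_character_def)
  then have "pair_words x (shuffle_many (u # us)) = (\<Sum>w\<leftarrow>shuffle_many us. x u * x w)"
    by (simp add: pair_words_def sum_list_concat_map cong: map_cong)
  then show ?case using Cons by (simp add: pair_words_def sum_list_const_mult)
qed

context
  fixes M :: "'a measure" and X :: "'a \<Rightarrow> real \<times> real \<Rightarrow> nat list \<Rightarrow> real"
    and d :: nat and T :: real
  assumes prob: "prob_space M"
    and character: "\<And>\<omega>. \<omega> \<in> space M \<Longrightarrow> shuffle_character d (X \<omega> (0, T))"
    and integrable: "\<And>\<sigma>. is_word d \<sigma> \<Longrightarrow> integrable M (\<lambda>\<omega>. X \<omega> (0, T) \<sigma>)"
begin

lemma pair_words_exp_sig: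
  "\<forall>w\<in>set ws. is_word d w \<Longrightarrow>
     pair_words (exp_sig M X T) ws = (\<integral>\<omega>. pair_words (X \<omega> (0, T)) ws \<partial>M)"
proof (induction ws)
  case (Cons w ws)
  have "integrable M (\<lambda>\<omega>. pair_words (X \<omega> (0, T)) ws)"
    using Cons.prems by (induction ws) (auto simp: pair_words_def integrable)
  then show ?case
    using Cons integrable by (simp add: pair_words_def exp_sig_def)
qed (simp add: pair_words_def)

lemma exp_sig_shuffle_many:
  assumes "\<forall>u\<in>set us. is_word d u"
  shows "pair_words (exp_sig M X T) (shuffle_many us) = (\<integral>\<omega>. prod_list (map (X \<omega> (0, T)) us) \<partial>M)"
proof -
  have "pair_words (exp_sig M X T) (shuffle_many us) =
      (\<integral>\<omega>. pair_words (X \<omega> (0, T)) (shuffle_many us) \<partial>M)"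
    using assms is_word_shuffle_many by (intro pair_words_exp_sig) blast
  also have "\<dots> = (\<integral>\<omega>. prod_list (map (X \<omega> (0, T)) us) \<partial>M)"
    using shuffle_character_pair_shuffle_many[OF character assms]
    by (intro Bochner_Integration.integral_cong) auto
  finally show ?thesis .
qed

text \<open>Pairing with \<open>\<mu> - 1\<close>, the argument of the logarithm in \<open>\<kappa> = log \<mu>\<close>.\<close>

lemma centred_exp_sig_shuffle_many:
  assumes "\<forall>u\<in>set us. is_word d u"
  shows "pair_words (\<lambda>v. exp_sig M X T v - tunit v) (shuffle_many us) =
    (if \<forall>u\<in>set us. u = [] then 0 else \<integral>\<omega>. prod_list (map (X \<omega> (0, T)) us) \<partial>M)"
proof -
  have "prod_list (map (X \<omega> (0, T)) us) = 1" if "\<forall>u\<in>set us. u = []" "\<omega> \<in> space M" for \<omega>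
    using that character[of \<omega>] by (induction us) (auto simp: shuffle_character_def)
  then have "(\<forall>u\<in>set us. u = []) \<Longrightarrow> (\<integral>\<omega>. prod_list (map (X \<omega> (0, T)) us) \<partial>M) = 1"
    using prob_space.prob_space[OF prob]
    by (simp add: Bochner_Integration.integral_cong[of M M _ "\<lambda>_. 1"])
  then show ?thesis
    by (simp add: pair_words_diff exp_sig_shuffle_many[OF assms] pair_words_tunit_shuffle_many)
qed

lemma exp_sig_Nil: "exp_sig M X T [] = 1"
  using exp_sig_shuffle_many[of "[]"] prob_space.prob_space[OF prob] by (simp add: pair_words_def)

lemma gen_moment_kernel_of:
  assumes "f \<in> surj_order_maps n ts"
  shows "gen_moment M X T ts (kernel_of (word_poset ts) f) =
    (\<Prod>m\<in>{1..n}. \<integral>\<omega>. prod_list (map (X \<omega> (0, T)) (fibre_words ts f m)) \<partial>M)"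
proof -
  have image: "f ` word_poset ts = {1..n}"
    using assms by (simp add: surj_order_maps_def)
  have blocks: "(\<Prod>j\<in>{j. j < length ts \<and> (\<exists>q. (j, q) \<in> {x \<in> word_poset ts. f x = m})}.
          X \<omega> (0, T) (block_word ts {x \<in> word_poset ts. f x = m} j))
      = prod_list (map (X \<omega> (0, T)) (fibre_words ts f m))" if "\<omega> \<in> space M" for \<omega> m
  proof -
    have "X \<omega> (0, T) [] = 1" using character[OF that] by (simp add: shuffle_character_def)
    from prod_block_words[where x = "X \<omega> (0, T)", OF this, of ts "{x \<in> word_poset ts. f x = m}"]
    show ?thesis by (simp add: fibre_words_def comp_def)
  qed
  have "inj_on (\<lambda>i. {x \<in> word_poset ts. f x = i}) {1..n}"
    using inj_on_fibres[of "word_poset ts" f] image by simp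
  then have "gen_moment M X T ts (kernel_of (word_poset ts) f) =
      (\<Prod>m\<in>{1..n}. \<integral>\<omega>. (\<Prod>j\<in>{j. j < length ts \<and> (\<exists>q. (j, q) \<in> {x \<in> word_poset ts. f x = m})}.
          X \<omega> (0, T) (block_word ts {x \<in> word_poset ts. f x = m} j)) \<partial>M)"
    unfolding gen_moment_def kernel_of_eq_image image by (simp add: prod.reindex)
  also have "\<dots> = (\<Prod>m\<in>{1..n}. \<integral>\<omega>. prod_list (map (X \<omega> (0, T)) (fibre_words ts f m)) \<partial>M)"
    by (rule prod.cong[OF refl], rule Bochner_Integration.integral_cong[OF refl]) (rule blocks)
  finally show ?thesis .
qed

lemma centred_exp_sig_tpow_shuffle_many:
  assumes words: "\<forall>t\<in>set ts. is_word d t"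
  shows "pair_words (tpow (\<lambda>v. exp_sig M X T v - tunit v) n) (shuffle_many ts) =
    (\<Sum>f\<in>surj_order_maps n ts. gen_moment M X T ts (kernel_of (word_poset ts) f))"
proof -
  define Q where
    "Q f m = pair_words (\<lambda>v. exp_sig M X T v - tunit v) (shuffle_many (fibre_words ts f m))" for f m
  have Q: "Q f m = (if m \<notin> f ` word_poset ts then 0
      else \<integral>\<omega>. prod_list (map (X \<omega> (0, T)) (fibre_words ts f m)) \<partial>M)" for f m
    unfolding Q_def using is_word_fibre_words[OF words]
    by (simp add: centred_exp_sig_shuffle_many fibre_words_all_Nil_iff)
  have "pair_words (tpow (\<lambda>v. exp_sig M X T v - tunit v) n) (shuffle_many ts)
      = (\<Sum>f\<in>order_maps n ts. \<Prod>m\<in>{1..n}. Q f m)"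
    unfolding Q_def by (rule pair_words_tpow_shuffle_many)
  also have "\<dots> = (\<Sum>f\<in>surj_order_maps n ts. \<Prod>m\<in>{1..n}. Q f m)"
  proof (rule sum.mono_neutral_right)
    show "\<forall>f\<in>order_maps n ts - surj_order_maps n ts. (\<Prod>m\<in>{1..n}. Q f m) = 0"
    proof
      fix f assume f: "f \<in> order_maps n ts - surj_order_maps n ts"
      then have "f ` word_poset ts \<subset> {1..n}"
        by (auto simp: order_maps_def surj_order_maps_def)
      then obtain m where "m \<in> {1..n}" "m \<notin> f ` word_poset ts" by blast
      then show "(\<Prod>m\<in>{1..n}. Q f m) = 0" by (intro prod_zero) (auto simp: Q)
    qed
  qed (simp_all add: finite_order_maps surj_order_maps_def)
  also have "\<dots> = (\<Sum>f\<in>surj_order_maps n ts. gen_moment M X T ts (kernel_of (word_poset ts) f))"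
  proof (rule sum.cong[OF refl])
    fix f assume f: "f \<in> surj_order_maps n ts"
    then have "f ` word_poset ts = {1..n}" by (simp add: surj_order_maps_def)
    then have "(\<Prod>m\<in>{1..n}. Q f m) =
        (\<Prod>m\<in>{1..n}. \<integral>\<omega>. prod_list (map (X \<omega> (0, T)) (fibre_words ts f m)) \<partial>M)"
      by (intro prod.cong refl) (simp add: Q)
    then show "(\<Prod>m\<in>{1..n}. Q f m) = gen_moment M X T ts (kernel_of (word_poset ts) f)"
      by (simp add: gen_moment_kernel_of[OF f])
  qed
  finally show ?thesis .
qed

lemma sig_cumulant_shuffle_many:
  assumes words: "\<forall>t\<in>set ts. is_word d t"
  shows "pair_words (sig_cumulant M X T) (shuffle_many ts) =
    (\<Sum>n\<le>card (word_poset ts). (-1) ^ (n - 1) / real n *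
       (\<Sum>f\<in>surj_order_maps n ts. gen_moment M X T ts (kernel_of (word_poset ts) f)))"
proof -
  let ?y = "\<lambda>v. exp_sig M X T v - tunit v"
  have "pair_words (sig_cumulant M X T) (shuffle_many ts) =
      (\<Sum>w\<leftarrow>shuffle_many ts. \<Sum>n\<le>card (word_poset ts). (-1) ^ (n - 1) / real n * tpow ?y n w)"
    unfolding pair_words_def sig_cumulant_def
  proof (rule arg_cong[where f = sum_list], rule map_cong[OF refl])
    fix w assume "w \<in> set (shuffle_many ts)"
    then show "tlog (exp_sig M X T) w =
        (\<Sum>n\<le>card (word_poset ts). (-1) ^ (n - 1) / real n * tpow ?y n w)"
      by (intro tlog_eq_sum exp_sig_Nil) (simp add: length_shuffle_many card_word_poset)
  qed
  also have "\<dots> = (\<Sum>n\<le>card (word_poset ts).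
      (-1) ^ (n - 1) / real n * pair_words (tpow ?y n) (shuffle_many ts))"
    unfolding sum_list_sum_swap by (simp only: pair_words_def sum_list_const_mult)
  finally show ?thesis
    by (simp add: centred_exp_sig_tpow_shuffle_many[OF words])
qed

end

theorem proposition3p3:
  fixes M :: "'a measure" and X :: "'a \<Rightarrow> real \<times> real \<Rightarrow> nat list \<Rightarrow> real"
    and d :: nat and p T :: real and ts :: "nat list list"
  assumes "prob_space M"
    and "p \<ge> 1" and "T > 0"
    and "\<forall>\<omega>\<in>space M. X \<omega> \<in> weakly_geometric d p T"
    and "\<forall>\<sigma>. is_word d \<sigma> \<longrightarrow> integrable M (\<lambda>\<omega>. X \<omega> (0, T) \<sigma>)"
    and "length ts \<ge> 1"
    and "\<forall>\<tau>\<in>set ts. \<tau> \<noteq> [] \<and> is_word d \<tau>"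
  shows "pair_words (sig_cumulant M X T) (shuffle_many ts) =
    (\<Sum>a\<in>Orp ts. (-1) ^ (card a - 1) * (real (orp_fact ts a) / real (card a))
                   * gen_moment M X T ts a)"
proof -
  define F where "F n a = (-1) ^ (n - 1) / real n * gen_moment M X T ts a" for n a
  have character: "shuffle_character d (X \<omega> (0, T))" if "\<omega> \<in> space M" for \<omega>
    using assms(3,4) that by (auto intro: weakly_geometric_shuffle_character)
  have integrable: "integrable M (\<lambda>\<omega>. X \<omega> (0, T) \<sigma>)" if "is_word d \<sigma>" for \<sigma>
    using assms(5) that by blast
  have words: "\<forall>t\<in>set ts. is_word d t" using assms(7) by simp
  have "pair_words (sig_cumulant M X T) (shuffle_many ts) =
      (\<Sum>n\<le>card (word_poset ts). \<Sum>f\<in>surj_order_maps n ts. F n (kernel_of (word_poset ts) f))"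
    using sig_cumulant_shuffle_many[where X = X and d = d, OF assms(1) character integrable words]
    by (simp add: F_def sum_distrib_left)
  also have "\<dots> = (\<Sum>a\<in>Orp ts. of_nat (orp_fact ts a) * F (card a) a)"
    by (rule sum_Orp_eq_sum_surj_order_maps[symmetric])
  finally show ?thesis by (simp add: F_def mult_ac)
qed

end
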